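(* Let $(r_{i,j})_{i\ge 0,\, j\in\mathbb{Z}}$ be the Pascal rhombus, defined by $r_{0,0}=r_{1,-1}=r_{1,0}=r_{1,1}=1$, $r_{0,j}=0$ for $j\neq 0$, $r_{1,j}=0$ for $j\notin\{-1,0,1\}$, and $r_{i,j}=r_{i-1,j-1}+r_{i-1,j}+r_{i-1,j+1}+r_{i-2,j}$ for $i\ge 2$, $j\in\mathbb{Z}$. For every integer $j\ge 0$, the generating function of the $j$th column is $$L_j(x):=\sum_{i\ge 0} r_{i,j}x^i=\frac{F(x)^{j+1}\,C\big(F(x)^2\big)^j}{x\big(1-2F(x)^2C(F(x)^2)\big)},$$ where $F(x)=\frac{x}{1-x-x^2}$ and $C(x)=\frac{1-\sqrt{1-4x}}{2x}$. Moreover, for $0\le j\le i$, $$r_{i,j}=\sum_{m=0}^{i}\sum_{l=0}^{i-j-2m}\binom{2m+j}{m}\binom{l+j+2m}{l}\binom{l}{i-j-2m-l}.$$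
   Context: $F(x)$ is the generating function of the Fibonacci numbers and $C(x)$ that of the Catalan numbers; $C(F(x)^2)$ denotes composition of formal power series. Sums with upper limit smaller than the lower limit are empty. *)

theory Defs
  imports "HOL-Computational_Algebra.Formal_Power_Series"
begin

fun rhombus :: "nat \<Rightarrow> int \<Rightarrow> int" where
  "rhombus 0 j = (if j = 0 then 1 else 0)"
| "rhombus (Suc 0) j = (if j \<in> {-1, 0, 1} then 1 else 0)"
| "rhombus (Suc (Suc n)) j =
     rhombus (Suc n) (j - 1) + rhombus (Suc n) j + rhombus (Suc n) (j + 1) + rhombus n j"

definition catalan :: "nat \<Rightarrow> nat" where
  "catalan n = ((2 * n) choose n) div (n + 1)"

definition C_fps :: "real fps" where
  "C_fps = Abs_fps (\<lambda>n. real (catalan n))"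

definition F_fps :: "real fps" where
  "F_fps = fps_X / (1 - fps_X - fps_X ^ 2)"

definition L_fps :: "nat \<Rightarrow> real fps" where
  "L_fps j = Abs_fps (\<lambda>i. real_of_int (rhombus i (int j)))"

end

theory Submission
  imports Defs
begin

text \<open>The defining recurrence of the rhombus, together with its symmetry \<open>r(i,-j) = r(i,j)\<close>,
  says that the columns satisfy \<open>L\<^sub>0 = F/x + 2 F L\<^sub>1\<close> and
  \<open>L\<^sub>j = F (L\<^sub>j\<^sub>-\<^sub>1 + L\<^sub>j\<^sub>+\<^sub>1)\<close> for \<open>j > 0\<close>.
  Since \<open>F\<close> has no constant term, this tridiagonal system has at most one solution.
  With \<open>B = F C(F\<^sup>2)\<close>, the Catalan equation \<open>C = 1 + x C\<^sup>2\<close> gives \<open>B = F (1 + B\<^sup>2)\<close>, so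
  \<open>(F/x) B\<^sup>j / (1 - 2 F B)\<close> is a solution. The generating functions \<open>W\<^sub>j\<close> of \<open>\<plusminus>1\<close>-walks
  from \<open>0\<close> to \<open>j\<close> solve the same system with \<open>F\<close> replaced by \<open>x\<close> and \<open>F/x\<close> by \<open>1\<close>, hence
  also \<open>L\<^sub>j = (F/x) W\<^sub>j(F)\<close>; expanding \<open>F/x = 1/(1 - y)\<close> with \<open>y = x + x\<^sup>2\<close> yields the
  binomial sum.\<close>

unbundle fps_syntax

subsection \<open>The Catalan generating function\<close>

lemma Suc_mult_choose_double_Suc: "(n + 1) * ((2 * n) choose (n + 1)) = n * ((2 * n) choose n)"
proof -
  have "(n + 1) * ((2 * n) choose (n + 1)) = 2 * n * ((2 * n - 1) choose n)"
    using binomial_absorption[of n "2 * n"] by simp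
  also have "\<dots> = (2 * n - n) * ((2 * n) choose n)"
    by (rule binomial_absorb_comp[symmetric])
  finally show ?thesis by simp
qed

lemma choose_double_Suc_symmetric: "(2 * m + 1) choose (m + 1) = (2 * m + 1) choose m"
  using binomial_symmetric[of "m + 1" "2 * m + 1"] by simp

lemma double_Suc_choose_Suc: "(2 * m + 2) choose (m + 1) = 2 * ((2 * m + 1) choose m)"
  using binomial_Suc_Suc[of "2 * m + 1" m] choose_double_Suc_symmetric[of m] by simp

lemma Suc_mult_central_binomial_Suc:
  "(n + 1) * ((2 * (n + 1)) choose (n + 1)) = 2 * (2 * n + 1) * ((2 * n) choose n)"
proof -
  have "(n + 1) * ((2 * (n + 1)) choose (n + 1)) = 2 * ((n + 1) * ((2 * n + 1) choose (n + 1)))"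
    using double_Suc_choose_Suc[of n] choose_double_Suc_symmetric[of n] by simp
  also have "\<dots> = 2 * (2 * n + 1) * ((2 * n) choose n)"
    using Suc_times_binomial[of n "2 * n"] by simp
  finally show ?thesis .
qed

lemma Suc_mult_catalan: "(n + 1) * catalan n = (2 * n) choose n"
proof -
  define b where "b = (2 * n) choose n"
  define c where "c = (2 * n) choose (n + 1)"
  have b_eq: "(n + 1) * (b - c) = b"
    using Suc_mult_choose_double_Suc[of n] unfolding b_def c_def
    by (simp add: diff_mult_distrib2)
  have "catalan n = ((n + 1) * (b - c)) div (n + 1)"
    unfolding catalan_def b_eq by (simp add: b_def)
  also have "\<dots> = b - c" by (rule nonzero_mult_div_cancel_left) simp
  finally show ?thesis using b_eq by (simp add: b_def)
qed

definition central_binomial_fps :: "real fps" where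
  "central_binomial_fps = Abs_fps (\<lambda>n. real ((2 * n) choose n))"

lemma fps_deriv_X_mult_C_fps: "fps_deriv (fps_X * C_fps) = central_binomial_fps"
proof (rule fps_ext)
  fix n
  have "fps_deriv (fps_X * C_fps) $ n = real ((n + 1) * catalan n)"
    by (simp add: C_fps_def algebra_simps)
  also have "\<dots> = central_binomial_fps $ n"
    by (simp only: Suc_mult_catalan) (simp add: central_binomial_fps_def)
  finally show "fps_deriv (fps_X * C_fps) $ n = central_binomial_fps $ n" .
qed

lemma central_binomial_fps_ode:
  "(1 - 4 * fps_X) * fps_deriv central_binomial_fps = 2 * central_binomial_fps"
proof -
  let ?S = central_binomial_fps
  have "fps_deriv ?S = 4 * (fps_X * fps_deriv ?S) + 2 * ?S"
  proof (rule fps_ext)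
    fix n
    have "real ((n + 1) * ((2 * (n + 1)) choose (n + 1)))
          = real (2 * (2 * n + 1) * ((2 * n) choose n))"
      by (simp only: Suc_mult_central_binomial_Suc)
    moreover have "(fps_X * fps_deriv ?S) $ n = real n * real ((2 * n) choose n)"
      by (cases n) (simp_all add: central_binomial_fps_def)
    ultimately show "fps_deriv ?S $ n = (4 * (fps_X * fps_deriv ?S) + 2 * ?S) $ n"
      by (simp add: numeral_fps_const central_binomial_fps_def algebra_simps)
  qed
  then show ?thesis by algebra
qed

lemma central_binomial_fps_nth_0 [simp]: "central_binomial_fps $ 0 = 1"
  by (simp add: central_binomial_fps_def)

text \<open>Both identities below are proved by showing that the difference of the two sides has
  vanishing derivative and vanishing constant term.\<close>

lemma central_binomial_fps_square: "(1 - 4 * fps_X) * central_binomial_fps ^ 2 = 1"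
proof -
  let ?S = central_binomial_fps
  have "fps_deriv ((1 - 4 * fps_X) * ?S ^ 2)
        = 2 * ?S * ((1 - 4 * fps_X) * fps_deriv ?S) - 4 * ?S ^ 2"
    by (simp add: power2_eq_square algebra_simps)
  also have "\<dots> = 0"
    by (simp add: central_binomial_fps_ode power2_eq_square)
  finally have "(1 - 4 * fps_X) * ?S ^ 2 = fps_const (((1 - 4 * fps_X) * ?S ^ 2) $ 0)"
    using fps_deriv_eq_0_iff by blast
  then show ?thesis by (simp add: power2_eq_square)
qed

lemma one_minus_2X_mult_C_fps: "1 - 2 * (fps_X * C_fps) = (1 - 4 * fps_X) * central_binomial_fps"
proof -
  define V where "V = 1 - 2 * (fps_X * C_fps) - (1 - 4 * fps_X) * central_binomial_fps"
  have "fps_deriv (2 * (fps_X * C_fps)) = 2 * central_binomial_fps"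
    by (simp only: mult_2 fps_deriv_add fps_deriv_X_mult_C_fps)
  then have "fps_deriv V
        = - 2 * central_binomial_fps + 4 * central_binomial_fps
          - (1 - 4 * fps_X) * fps_deriv central_binomial_fps"
    unfolding V_def fps_deriv_sub by (simp add: algebra_simps)
  also have "\<dots> = 0" by (simp add: central_binomial_fps_ode)
  finally have "V = fps_const (V $ 0)"
    using fps_deriv_eq_0_iff by blast
  then show ?thesis by (simp add: V_def)
qed

lemma C_fps_eq: "C_fps = 1 + fps_X * C_fps ^ 2"
proof -
  have "(1 - 2 * (fps_X * C_fps)) ^ 2
        = (1 - 4 * fps_X) * ((1 - 4 * fps_X) * central_binomial_fps ^ 2)"
    unfolding one_minus_2X_mult_C_fps by algebra
  then have "(1 - 2 * (fps_X * C_fps)) ^ 2 = 1 - 4 * fps_X"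
    by (simp add: central_binomial_fps_square)
  then have "4 * fps_X * (C_fps - 1 - fps_X * C_fps ^ 2) = 0"
    by algebra
  then have "C_fps - 1 - fps_X * C_fps ^ 2 = 0" by simp
  then show ?thesis by (simp add: algebra_simps)
qed

subsection \<open>A tridiagonal system of power series\<close>

text \<open>The recurrence \<open>Q j = [j = 0] c + y (Q (j - 1) + Q (j + 1))\<close> of a symmetric sequence
  \<open>Q (-j) = Q j\<close> on \<open>\<int>\<close>, restricted to \<open>j \<ge> 0\<close>; the factor \<open>2\<close> comes from \<open>Q (-1) = Q 1\<close>.\<close>

definition tridiag_solution :: "'a::comm_ring_1 fps \<Rightarrow> 'a fps \<Rightarrow> (nat \<Rightarrow> 'a fps) \<Rightarrow> bool" where
  "tridiag_solution c y Q \<longleftrightarrow>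
     Q 0 = c + 2 * y * Q 1 \<and> (\<forall>j. Q (Suc j) = y * (Q j + Q (Suc (Suc j))))"

lemma fps_mult_nth_eq_0:
  fixes y A :: "'a::comm_semiring_0 fps"
  assumes "y $ 0 = 0" and "\<forall>k<n. A $ k = 0"
  shows "(y * A) $ n = 0"
  unfolding fps_mult_nth
proof (rule sum.neutral, rule ballI)
  fix i assume "i \<in> {0..n}"
  then show "y $ i * A $ (n - i) = 0"
    using assms by (cases "i = 0") auto
qed

text \<open>As \<open>y\<close> has no constant term, the \<open>n\<close>-th coefficients of a solution are determined by
  those of order below \<open>n\<close>.\<close>

lemma tridiag_solution_unique:
  assumes "y $ 0 = 0" and "tridiag_solution c y Q" and "tridiag_solution c y Q'"
  shows "Q = Q'"
proof -
  define R where "R j = Q j - Q' j" for j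
  have Q_0: "Q 0 = c + 2 * y * Q 1" and Q_Suc: "\<And>j. Q (Suc j) = y * (Q j + Q (Suc (Suc j)))"
    using assms(2) unfolding tridiag_solution_def by blast+
  have Q'_0: "Q' 0 = c + 2 * y * Q' 1" and Q'_Suc: "\<And>j. Q' (Suc j) = y * (Q' j + Q' (Suc (Suc j)))"
    using assms(3) unfolding tridiag_solution_def by blast+
  have R_0: "R 0 = y * (2 * R 1)"
    unfolding R_def Q_0 Q'_0 by (simp add: algebra_simps)
  have R_Suc: "R (Suc j) = y * (R j + R (Suc (Suc j)))" for j
    unfolding R_def Q_Suc[of j] Q'_Suc[of j] by (simp add: algebra_simps)
  have "\<forall>j. R j $ n = 0" for n
  proof (induction n rule: less_induct)
    case (less n)
    show ?case
    proof
      fix j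
      show "R j $ n = 0"
      proof (cases j)
        case 0
        have "\<forall>k<n. (2 * R 1) $ k = 0" using less by (simp add: numeral_fps_const)
        then show ?thesis unfolding 0 R_0 by (rule fps_mult_nth_eq_0[OF assms(1)])
      next
        case (Suc i)
        have "\<forall>k<n. (R i + R (Suc (Suc i))) $ k = 0" using less by simp
        then show ?thesis unfolding Suc R_Suc[of i] by (rule fps_mult_nth_eq_0[OF assms(1)])
      qed
    qed
  qed
  then have "R j = 0" for j by (intro fps_ext) simp
  then show ?thesis unfolding R_def by (simp add: fun_eq_iff)
qed

lemma tridiag_solution_compose:
  fixes P :: "nat \<Rightarrow> 'a::idom fps"
  assumes "y $ 0 = 0" and "tridiag_solution 1 fps_X P"
  shows "tridiag_solution u y (\<lambda>j. u * (P j oo y))"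
proof -
  have P_0: "P 0 = 1 + 2 * fps_X * P 1"
    and P_Suc: "\<And>j. P (Suc j) = fps_X * (P j + P (Suc (Suc j)))"
    using assms(2) unfolding tridiag_solution_def by blast+
  have X_compose: "(fps_X * A) oo y = y * (A oo y)" for A
    by (simp add: fps_compose_mult_distrib[OF assms(1)] assms(1))
  have "2 * fps_X * P 1 oo y = 2 * y * (P 1 oo y)"
    using X_compose[of "2 * P 1"]
    by (simp add: fps_compose_mult_distrib[OF assms(1)] mult.assoc mult.left_commute)
  then have "u * (P 0 oo y) = u + 2 * y * (u * (P 1 oo y))"
    unfolding P_0 fps_compose_add_distrib by (simp add: algebra_simps)
  moreover have "u * (P (Suc j) oo y) = y * (u * (P j oo y) + u * (P (Suc (Suc j)) oo y))" for j
    unfolding P_Suc[of j] X_compose fps_compose_add_distrib by (simp add: algebra_simps)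
  ultimately show ?thesis
    unfolding tridiag_solution_def by blast
qed

lemma rhombus_uminus: "rhombus n (- j) = rhombus n j"
proof (induction n j rule: rhombus.induct)
  case (3 n j)
  have "- j - 1 = - (j + 1)" and "- j + 1 = - (j - 1)" by simp_all
  then have "rhombus (Suc n) (- j - 1) = rhombus (Suc n) (j + 1)"
    and "rhombus (Suc n) (- j + 1) = rhombus (Suc n) (j - 1)"
    using "3.IH"(1,3) by simp_all
  then show ?case using "3.IH"(2,4) by simp
qed auto

definition rhombus_column_fps :: "int \<Rightarrow> real fps" where
  "rhombus_column_fps j = Abs_fps (\<lambda>i. real_of_int (rhombus i j))"

lemma rhombus_column_fps_rec:
  "(1 - fps_X - fps_X ^ 2) * rhombus_column_fps j
     = (if j = 0 then 1 else 0) + fps_X * (rhombus_column_fps (j - 1) + rhombus_column_fps (j + 1))"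
proof (rule fps_ext)
  fix n
  have "(1 - fps_X - fps_X ^ 2) * rhombus_column_fps j
        = rhombus_column_fps j - fps_X * rhombus_column_fps j - fps_X ^ 2 * rhombus_column_fps j"
    by (simp add: algebra_simps)
  then show "((1 - fps_X - fps_X ^ 2) * rhombus_column_fps j) $ n
      = ((if j = 0 then 1 else 0) + fps_X * (rhombus_column_fps (j - 1) + rhombus_column_fps (j + 1))) $ n"
    by (cases n; cases "n - 1")
       (auto simp: rhombus_column_fps_def fps_X_power_mult_nth)
qed

definition F_div_X :: "real fps" where
  "F_div_X = inverse (1 - fps_X - fps_X ^ 2)"

lemma F_div_X_mult: "F_div_X * (1 - fps_X - fps_X ^ 2) = 1"
  unfolding F_div_X_def by (rule inverse_mult_eq_1) simp

lemma F_fps_eq: "F_fps = fps_X * F_div_X"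
  unfolding F_fps_def F_div_X_def by (simp add: fps_divide_unit)

lemma F_fps_nth_0 [simp]: "F_fps $ 0 = 0"
  by (simp add: F_fps_eq)

lemma tridiag_solution_L_fps: "tridiag_solution F_div_X F_fps L_fps"
proof -
  let ?L = rhombus_column_fps
  have L_eq: "L_fps j = ?L (int j)" for j
    unfolding L_fps_def rhombus_column_fps_def by simp
  have rec: "?L j = (if j = 0 then F_div_X else 0) + F_fps * (?L (j - 1) + ?L (j + 1))" for j
  proof -
    have "?L j = F_div_X * ((1 - fps_X - fps_X ^ 2) * ?L j)"
      by (simp only: mult.assoc[symmetric] F_div_X_mult mult_1_left)
    then show ?thesis
      unfolding rhombus_column_fps_rec by (simp add: F_fps_eq algebra_simps)
  qed
  have "?L (- 1) = ?L 1"
    unfolding rhombus_column_fps_def by (simp only: rhombus_uminus)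
  then have "L_fps 0 = F_div_X + 2 * F_fps * L_fps 1"
    unfolding L_eq using rec[of 0] by (simp add: algebra_simps mult_2)
  moreover have "L_fps (Suc j) = F_fps * (L_fps j + L_fps (Suc (Suc j)))" for j
    unfolding L_eq using rec[of "int (Suc j)"] by (simp add: algebra_simps)
  ultimately show ?thesis
    unfolding tridiag_solution_def by blast
qed

subsection \<open>The closed form\<close>

definition B_fps :: "real fps" where
  "B_fps = F_fps * (C_fps oo F_fps ^ 2)"

lemma B_fps_eq: "B_fps = F_fps * (1 + B_fps ^ 2)"
proof -
  have F2_0: "(F_fps ^ 2) $ 0 = 0" by (simp add: power2_eq_square)
  have "C_fps oo F_fps ^ 2 = (1 + fps_X * C_fps ^ 2) oo F_fps ^ 2"
    by (subst C_fps_eq) (rule refl)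
  also have "\<dots> = 1 + F_fps ^ 2 * (C_fps oo F_fps ^ 2) ^ 2"
    by (simp add: fps_compose_add_distrib fps_compose_mult_distrib[OF F2_0]
        fps_compose_power[OF F2_0] F2_0)
  finally show ?thesis unfolding B_fps_def by algebra
qed

lemma tridiag_solution_closed_form:
  "tridiag_solution F_div_X F_fps (\<lambda>j. F_div_X * B_fps ^ j * inverse (1 - 2 * F_fps * B_fps))"
proof -
  define D where "D = 1 - 2 * F_fps * B_fps"
  have "inverse D * D = 1"
    by (rule inverse_mult_eq_1) (simp add: D_def)
  then have "F_div_X * inverse D = F_div_X + 2 * F_fps * (F_div_X * B_fps * inverse D)"
    unfolding D_def by algebra
  moreover have "F_div_X * B_fps ^ Suc j * inverse D
      = F_fps * (F_div_X * B_fps ^ j * inverse D + F_div_X * B_fps ^ Suc (Suc j) * inverse D)" for j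
  proof -
    have "F_fps * (F_div_X * B_fps ^ j * inverse D + F_div_X * B_fps ^ Suc (Suc j) * inverse D)
        = F_div_X * B_fps ^ j * inverse D * (F_fps * (1 + B_fps ^ 2))"
      by (simp add: algebra_simps power2_eq_square)
    also have "\<dots> = F_div_X * B_fps ^ Suc j * inverse D"
      by (simp only: B_fps_eq[symmetric]) (simp add: algebra_simps)
    finally show ?thesis by simp
  qed
  ultimately show ?thesis
    unfolding tridiag_solution_def D_def by simp
qed

lemma L_fps_closed_form:
  "L_fps j = F_div_X * B_fps ^ j * inverse (1 - 2 * F_fps * B_fps)"
  using fun_cong[OF tridiag_solution_unique[OF F_fps_nth_0 tridiag_solution_L_fps
        tridiag_solution_closed_form], of j]
  by simp

lemma L_fps_eq_quotient:
  "L_fps j = (F_fps ^ (j + 1) * (C_fps oo F_fps ^ 2) ^ j)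
               / (fps_X * (1 - 2 * F_fps ^ 2 * (C_fps oo F_fps ^ 2)))"
proof -
  have numerator: "F_fps ^ (j + 1) * (C_fps oo F_fps ^ 2) ^ j = fps_X * (F_div_X * B_fps ^ j)"
    by (simp add: B_fps_def F_fps_eq power_mult_distrib algebra_simps)
  have denominator:
    "fps_X * (1 - 2 * F_fps ^ 2 * (C_fps oo F_fps ^ 2)) = fps_X * (1 - 2 * F_fps * B_fps)"
    by (simp add: B_fps_def power2_eq_square algebra_simps)
  have "(fps_X * (F_div_X * B_fps ^ j)) / (fps_X * (1 - 2 * F_fps * B_fps))
      = F_div_X * B_fps ^ j / (1 - 2 * F_fps * B_fps)"
    by (rule div_mult_mult1) simp
  also have "\<dots> = F_div_X * B_fps ^ j * inverse (1 - 2 * F_fps * B_fps)"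
    by (rule fps_divide_unit) (simp add: B_fps_def)
  finally show ?thesis
    unfolding numerator denominator L_fps_closed_form by (rule sym)
qed

subsection \<open>Coefficients\<close>

text \<open>The \<open>k\<close>-th coefficient of \<open>walk_fps j\<close> counts the walks of \<open>k\<close> steps \<open>\<plusminus>1\<close> from
  \<open>0\<close> to \<open>j\<close>; these satisfy the tridiagonal system with \<open>c = 1\<close> and \<open>y = x\<close>.\<close>

definition walk_fps :: "nat \<Rightarrow> real fps" where
  "walk_fps j = Abs_fps (\<lambda>k. if j \<le> k \<and> even (k - j) then real (k choose ((k - j) div 2)) else 0)"

lemma walk_fps_0: "walk_fps 0 = 1 + 2 * fps_X * walk_fps 1"
proof (rule fps_ext)
  fix k
  have two_X: "(2 * fps_X * A :: real fps) $ n = (if n = 0 then 0 else 2 * A $ (n - 1))" for A n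
    by (simp add: numeral_fps_const mult.assoc)
  consider "k = 0" | "k = 1" | m :: nat where "k = 2 * m + 2" | m :: nat where "k = 2 * m + 3"
  proof -
    have "k = 0 \<or> k = 1 \<or> (\<exists>m. k = 2 * m + 2) \<or> (\<exists>m. k = 2 * m + 3)" by presburger
    then show ?thesis using that by blast
  qed
  then show "walk_fps 0 $ k = (1 + 2 * fps_X * walk_fps 1) $ k"
  proof cases
    case 3
    then show ?thesis
      using double_Suc_choose_Suc[of m] by (simp add: walk_fps_def two_X)
  qed (simp_all add: walk_fps_def two_X)
qed

lemma walk_fps_Suc: "walk_fps (Suc j) = fps_X * (walk_fps j + walk_fps (Suc (Suc j)))"
proof (rule fps_ext)
  fix k
  show "walk_fps (Suc j) $ k = (fps_X * (walk_fps j + walk_fps (Suc (Suc j)))) $ k"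
  proof (cases k)
    case (Suc k')
    show ?thesis
    proof (cases "j \<le> k' \<and> even (k' - j)")
      case True
      then obtain m where "k' = j + 2 * m"
        by (metis evenE le_add_diff_inverse)
      then show ?thesis
        using Suc by (cases m) (simp_all add: walk_fps_def)
    next
      case False
      then show ?thesis
        using Suc by (auto simp: walk_fps_def)
    qed
  qed (simp add: walk_fps_def)
qed

lemma tridiag_solution_walk_fps: "tridiag_solution 1 fps_X walk_fps"
  unfolding tridiag_solution_def using walk_fps_0 walk_fps_Suc by blast

lemma L_fps_eq_compose_walk_fps: "L_fps j = F_div_X * (walk_fps j oo F_fps)"
  using fun_cong[OF tridiag_solution_unique[OF F_fps_nth_0 tridiag_solution_L_fps
        tridiag_solution_compose[OF F_fps_nth_0 tridiag_solution_walk_fps]], of j]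
  by simp

lemma fps_mult_compose_nth:
  fixes u A f :: "'a::comm_ring_1 fps"
  assumes "f $ 0 = 0"
  shows "(u * (A oo f)) $ i = (\<Sum>k=0..i. A $ k * (u * f ^ k) $ i)"
proof -
  have "(u * (A oo f)) $ i = (\<Sum>a=0..i. u $ a * (\<Sum>k=0..i-a. A $ k * (f ^ k) $ (i - a)))"
    unfolding fps_mult_nth fps_compose_nth ..
  also have "\<dots> = (\<Sum>a=0..i. u $ a * (\<Sum>k=0..i. A $ k * (f ^ k) $ (i - a)))"
  proof (rule sum.cong[OF refl])
    fix a
    have "(\<Sum>k=0..i-a. A $ k * (f ^ k) $ (i - a)) = (\<Sum>k=0..i. A $ k * (f ^ k) $ (i - a))"
      by (rule sum.mono_neutral_left)
         (use startsby_zero_power_prefix[OF assms] in auto)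
    then show "u $ a * (\<Sum>k=0..i-a. A $ k * (f ^ k) $ (i - a))
             = u $ a * (\<Sum>k=0..i. A $ k * (f ^ k) $ (i - a))" by simp
  qed
  also have "\<dots> = (\<Sum>a=0..i. \<Sum>k=0..i. A $ k * (u $ a * (f ^ k) $ (i - a)))"
    by (simp add: sum_distrib_left mult.left_commute)
  also have "\<dots> = (\<Sum>k=0..i. \<Sum>a=0..i. A $ k * (u $ a * (f ^ k) $ (i - a)))"
    by (rule sum.swap)
  also have "\<dots> = (\<Sum>k=0..i. A $ k * (\<Sum>a=0..i. u $ a * (f ^ k) $ (i - a)))"
    by (simp add: sum_distrib_left)
  also have "\<dots> = (\<Sum>k=0..i. A $ k * (u * f ^ k) $ i)"
    unfolding fps_mult_nth ..
  finally show ?thesis .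
qed

lemma F_div_X_eq_compose: "F_div_X = Abs_fps (\<lambda>_. 1) oo (fps_X + fps_X ^ 2)"
proof -
  have Y_0: "(fps_X + fps_X ^ 2 :: real fps) $ 0 = 0" by simp
  have "inverse (1 - fps_X) = (Abs_fps (\<lambda>_. 1) :: real fps)"
    by (metis fps_inverse_gp' fps_inverse_idempotent fps_nth_Abs_fps one_neq_zero)
  then have "Abs_fps (\<lambda>_. 1) oo (fps_X + fps_X ^ 2)
      = inverse ((1 - fps_X) oo (fps_X + fps_X ^ 2) :: real fps)"
    by (metis fps_inverse_compose[OF Y_0] fps_sub_nth fps_one_nth fps_X_nth
        diff_zero one_neq_zero)
  also have "(1 - fps_X) oo (fps_X + fps_X ^ 2) = (1 - fps_X - fps_X ^ 2 :: real fps)"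
    by (simp add: fps_compose_sub_distrib Y_0)
  finally show ?thesis unfolding F_div_X_def by simp
qed

lemma fps_ones_power_nth:
  "(Abs_fps (\<lambda>_. 1 :: 'a::comm_semiring_1) ^ (k + 1)) $ l = of_nat ((l + k) choose l)"
proof (induction k arbitrary: l)
  case (Suc k)
  have "(Abs_fps (\<lambda>_. 1 :: 'a) ^ (Suc k + 1)) $ l = (\<Sum>a=0..l. of_nat ((a + k) choose a))"
    by (simp only: power_Suc2 add_Suc fps_mult_nth Suc) simp
  also have "\<dots> = of_nat (\<Sum>a\<le>l. (k + a) choose a)"
    by (simp add: atLeast0AtMost add.commute)
  also have "\<dots> = of_nat ((l + Suc k) choose l)"
    by (simp only: sum_choose_lower) (simp add: add.commute)
  finally show ?case .
qed simp

lemma X_plus_X_square_power_nth: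
  "((fps_X + fps_X ^ 2 :: 'a::field_char_0 fps) ^ l) $ n
     = (if n < l then 0 else of_nat (l choose (n - l)))"
proof -
  have "(fps_X + fps_X ^ 2 :: 'a fps) ^ l = fps_X ^ l * fps_binomial (of_nat l)"
    by (simp add: fps_binomial_of_nat power2_eq_square algebra_simps flip: power_mult_distrib)
  then show ?thesis
    by (simp add: fps_X_power_mult_nth binomial_gbinomial)
qed

lemma F_div_X_mult_F_power_nth:
  "(F_div_X * F_fps ^ k) $ i
     = (if k \<le> i then (\<Sum>l=0..i-k. real ((l + k) choose l) * real (l choose (i - k - l))) else 0)"
proof -
  have Y_0: "(fps_X + fps_X ^ 2 :: real fps) $ 0 = 0" by simp
  have "F_div_X * F_fps ^ k = fps_X ^ k * (Abs_fps (\<lambda>_. 1) ^ (k + 1) oo (fps_X + fps_X ^ 2))"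
    unfolding F_fps_eq fps_compose_power[OF Y_0, symmetric] F_div_X_eq_compose[symmetric]
    by (simp add: power_mult_distrib algebra_simps)
  then show ?thesis
    by (simp only: fps_X_power_mult_nth fps_compose_nth fps_ones_power_nth
        X_plus_X_square_power_nth) (simp add: diff_diff_left)
qed

lemma of_int_rhombus_eq_sum:
  "real_of_int (rhombus i (int j))
     = (\<Sum>m=0..i. real ((2 * m + j) choose m) * (F_div_X * F_fps ^ (2 * m + j)) $ i)"
proof -
  let ?g = "\<lambda>k. walk_fps j $ k * (F_div_X * F_fps ^ k) $ i"
  let ?K = "(\<lambda>m. 2 * m + j) ` {0..i}"
  have "real_of_int (rhombus i (int j)) = (\<Sum>k=0..i. ?g k)"
    using L_fps_eq_compose_walk_fps[of j]
    by (simp add: L_fps_def fps_eq_iff fps_mult_compose_nth)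
  also have "\<dots> = sum ?g ({0..i} \<union> ?K)"
  proof (rule sum.mono_neutral_left)
    show "\<forall>k \<in> {0..i} \<union> ?K - {0..i}. ?g k = 0"
      by (simp add: F_div_X_mult_F_power_nth)
  qed auto
  also have "\<dots> = sum ?g ?K"
  proof (rule sum.mono_neutral_right)
    show "\<forall>k \<in> {0..i} \<union> ?K - ?K. ?g k = 0"
    proof
      fix k assume k: "k \<in> {0..i} \<union> ?K - ?K"
      have "\<not> (j \<le> k \<and> even (k - j))"
      proof
        assume "j \<le> k \<and> even (k - j)"
        then obtain m where "k = 2 * m + j" by (metis evenE le_add_diff_inverse2)
        with k show False by auto
      qed
      then have "walk_fps j $ k = 0"
        unfolding walk_fps_def fps_nth_Abs_fps by (rule if_not_P)
      then show "?g k = 0" by simp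
    qed
  qed auto
  also have "\<dots> = (\<Sum>m=0..i. ?g (2 * m + j))"
    by (subst sum.reindex) (auto simp: inj_on_def)
  also have "\<dots> = (\<Sum>m=0..i. real ((2 * m + j) choose m) * (F_div_X * F_fps ^ (2 * m + j)) $ i)"
    by (simp add: walk_fps_def)
  finally show ?thesis .
qed

lemma of_int_rhombus_summand:
  "real_of_int (\<Sum>l \<in> {0..int i - int j - 2 * int m}.
        int (((2 * m + j) choose m) * ((nat l + j + 2 * m) choose (nat l))
             * (nat l choose nat (int i - int j - 2 * int m - l))))
     = real ((2 * m + j) choose m) * (F_div_X * F_fps ^ (2 * m + j)) $ i"
proof (cases "2 * m + j \<le> i")
  case True
  define N where "N = i - (2 * m + j)"
  have N_eq: "int i - int j - 2 * int m = int N"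
    using True unfolding N_def by simp
  have "{0..int N} = int ` {0..N}"
    by (simp add: image_int_atLeastAtMost)
  then have "(\<Sum>l \<in> {0..int i - int j - 2 * int m}.
        int (((2 * m + j) choose m) * ((nat l + j + 2 * m) choose (nat l))
             * (nat l choose nat (int i - int j - 2 * int m - l))))
      = (\<Sum>l=0..N. int (((2 * m + j) choose m) * ((l + j + 2 * m) choose l) * (l choose (N - l))))"
    unfolding N_eq by (simp add: sum.reindex nat_diff_distrib)
  then show ?thesis
    using True
    by (simp add: F_div_X_mult_F_power_nth N_def sum_distrib_left algebra_simps diff_diff_left)
qed (simp add: F_div_X_mult_F_power_nth)

lemma rhombus_eq_binomial_sum:
  "rhombus i (int j) =
     (\<Sum>m = 0..i. \<Sum>l \<in> {0..int i - int j - 2 * int m}.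
        int (((2 * m + j) choose m) * ((nat l + j + 2 * m) choose (nat l))
             * (nat l choose nat (int i - int j - 2 * int m - l))))"
proof -
  have "real_of_int (rhombus i (int j)) =
     real_of_int (\<Sum>m = 0..i. \<Sum>l \<in> {0..int i - int j - 2 * int m}.
        int (((2 * m + j) choose m) * ((nat l + j + 2 * m) choose (nat l))
             * (nat l choose nat (int i - int j - 2 * int m - l))))"
    unfolding of_int_rhombus_eq_sum of_int_sum[of _ "{0..i}"] of_int_rhombus_summand ..
  then show ?thesis by (simp only: of_int_eq_iff)
qed

theorem corollary2p4:
  shows "(\<forall>j::nat. L_fps j =
            (F_fps ^ (j + 1) * (C_fps oo F_fps ^ 2) ^ j)
            / (fps_X * (1 - 2 * F_fps ^ 2 * (C_fps oo F_fps ^ 2))))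
       \<and> (\<forall>i j :: nat. j \<le> i \<longrightarrow>
            rhombus i (int j) =
              (\<Sum>m = 0..i. \<Sum>l \<in> {0..int i - int j - 2 * int m}.
                  int (((2 * m + j) choose m)
                       * ((nat l + j + 2 * m) choose (nat l))
                       * (nat l choose nat (int i - int j - 2 * int m - l)))))"
  using L_fps_eq_quotient rhombus_eq_binomial_sum by blast

end
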